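(* Let $R$ be a GSWNC ring in which $2$ is invertible and such that $u^2 = 1$ for every unit $u \in R$. Then $R$ is commutative.
   Context: All rings are associative with identity. An element $a$ of a ring is strongly weakly nil-clean if there exist an idempotent $e$ and a nilpotent $q$ with $eq = qe$ such that $a = q + e$ or $a = q - e$. A ring is GSWNC if every non-invertible element is strongly weakly nil-clean. *)

theory Defs
  imports Main
begin

definition unit_elem :: "'a::ring_1 \<Rightarrow> bool" where
  "unit_elem u \<longleftrightarrow> (\<exists>v. u * v = 1 \<and> v * u = 1)"

definition idempotent_elem :: "'a::ring_1 \<Rightarrow> bool" where
  "idempotent_elem e \<longleftrightarrow> e * e = e"

definition nilpotent_elem :: "'a::ring_1 \<Rightarrow> bool" where
  "nilpotent_elem q \<longleftrightarrow> (\<exists>n::nat. q ^ n = 0)"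

definition strongly_weakly_nil_clean :: "'a::ring_1 \<Rightarrow> bool" where
  "strongly_weakly_nil_clean a \<longleftrightarrow>
     (\<exists>e q. idempotent_elem e \<and> nilpotent_elem q \<and> e * q = q * e \<and>
            (a = q + e \<or> a = q - e))"

definition GSWNC :: "'a::ring_1 itself \<Rightarrow> bool" where
  "GSWNC _ \<longleftrightarrow> (\<forall>a::'a. \<not> unit_elem a \<longrightarrow> strongly_weakly_nil_clean a)"

end

theory Submission
  imports Defs
begin

text \<open>Invertibility of 2 and \<open>u\<^sup>2 = 1\<close> for the unit \<open>1 + q\<close> force every square-zero \<open>q\<close>
  to vanish, so \<open>R\<close> is reduced. In a reduced ring idempotents are central and nilpotents
  are zero, so every strongly weakly nil-clean element is \<open>\<plusminus>\<close> an idempotent and hence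
  central; this covers all non-units. Finally the units form a group of exponent 2, which is
  abelian.\<close>

lemma unit_elem_mult:
  fixes u w :: "'a::ring_1"
  assumes "unit_elem u" and "unit_elem w"
  shows "unit_elem (u * w)"
proof -
  obtain u' where u': "u * u' = 1" "u' * u = 1" using assms(1) unfolding unit_elem_def by blast
  obtain w' where w': "w * w' = 1" "w' * w = 1" using assms(2) unfolding unit_elem_def by blast
  have "u * w * (w' * u') = u * (w * w') * u'" by (simp add: mult.assoc)
  moreover have "w' * u' * (u * w) = w' * (u' * u) * w" by (simp add: mult.assoc)
  ultimately have "u * w * (w' * u') = 1" "w' * u' * (u * w) = 1" using u' w' by simp_all
  then show ?thesis unfolding unit_elem_def by blast
qed

lemma units_commute_if_square_one:
  fixes u w :: "'a::ring_1"
  assumes sq: "\<And>v::'a. unit_elem v \<Longrightarrow> v ^ 2 = 1"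
    and "unit_elem u" and "unit_elem w"
  shows "u * w = w * u"
proof -
  have uu: "u * u = 1" and ww: "w * w = 1"
    using sq[OF \<open>unit_elem u\<close>] sq[OF \<open>unit_elem w\<close>] by (simp_all add: power2_eq_square)
  have uwuw: "u * w * (u * w) = 1"
    using sq[OF unit_elem_mult[OF assms(2,3)]] by (simp add: power2_eq_square)
  have "w * u = (u * u) * (w * u) * (w * w)" by (simp add: uu ww)
  also have "\<dots> = u * (u * w * (u * w)) * w" by (simp add: mult.assoc)
  also have "\<dots> = u * w" by (simp add: uwuw)
  finally show ?thesis by simp
qed

lemma square_zero_eq_zero:
  fixes q :: "'a::ring_1"
  assumes two: "unit_elem (2::'a)"
    and sq: "\<And>u::'a. unit_elem u \<Longrightarrow> u ^ 2 = 1"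
    and q2: "q * q = 0"
  shows "q = 0"
proof -
  have "unit_elem (1 + q)" unfolding unit_elem_def
    by (rule exI[of _ "1 - q"]) (simp add: algebra_simps q2)
  then have "(1 + q) ^ 2 = 1" by (rule sq)
  then have "2 * q = 0" by (simp add: power2_eq_square algebra_simps q2 mult_2)
  moreover obtain v where "v * 2 = (1::'a)" using two unfolding unit_elem_def by blast
  ultimately show ?thesis by (metis mult.assoc mult_1 mult_zero_right)
qed

lemma nilpotent_eq_zero_if_reduced:
  fixes q :: "'a::ring_1"
  assumes reduced: "\<And>z::'a. z * z = 0 \<Longrightarrow> z = 0"
    and "q ^ n = 0"
  shows "q = 0"
  using \<open>q ^ n = 0\<close>
proof (induction n)
  case 0
  then show ?case by (metis mult_1_right mult_zero_right power_0)
next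
  case (Suc n)
  show ?case
  proof (cases n)
    case 0
    with Suc.prems show ?thesis by simp
  next
    case (Suc m)
    have "q ^ n * q ^ n = q ^ Suc n * q ^ m"
      unfolding power_add[symmetric] by (simp add: Suc)
    then have "q ^ n * q ^ n = 0" using \<open>q ^ Suc n = 0\<close> by simp
    then show ?thesis by (rule Suc.IH[OF reduced])
  qed
qed

text \<open>Both \<open>e x (1 - e)\<close> and \<open>(1 - e) x e\<close> square to zero, so \<open>e x = e x e = x e\<close>.\<close>

lemma idempotent_central_if_reduced:
  fixes e x :: "'a::ring_1"
  assumes reduced: "\<And>z::'a. z * z = 0 \<Longrightarrow> z = 0"
    and ee: "e * e = e"
  shows "e * x = x * e"
proof -
  have ee': "\<And>y. e * (e * y) = e * y" using ee by (simp add: mult.assoc[symmetric])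
  have "(e * x - e * x * e) * (e * x - e * x * e) = 0"
    by (simp add: algebra_simps ee ee')
  then have "e * x - e * x * e = 0" by (rule reduced)
  moreover have "(x * e - e * x * e) * (x * e - e * x * e) = 0"
    by (simp add: algebra_simps ee ee')
  then have "x * e - e * x * e = 0" by (rule reduced)
  ultimately show ?thesis by simp
qed

lemma strongly_weakly_nil_clean_central_if_reduced:
  fixes a x :: "'a::ring_1"
  assumes reduced: "\<And>z::'a. z * z = 0 \<Longrightarrow> z = 0"
    and "strongly_weakly_nil_clean a"
  shows "a * x = x * a"
proof -
  obtain e q n where e: "e * e = e" and q: "q ^ n = 0" and a: "a = q + e \<or> a = q - e"
    using assms(2)
    unfolding strongly_weakly_nil_clean_def idempotent_elem_def nilpotent_elem_def by blast
  have "q = 0" using nilpotent_eq_zero_if_reduced[OF reduced q] .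
  moreover have "e * x = x * e" using idempotent_central_if_reduced[OF reduced e] .
  ultimately show ?thesis using a by (auto simp: algebra_simps)
qed

theorem lemma2p49:
  assumes "GSWNC TYPE('a::ring_1)"
    and "unit_elem (2::'a)"
    and "\<And>u::'a. unit_elem u \<Longrightarrow> u ^ 2 = 1"
  shows "\<forall>x y :: 'a. x * y = y * x"
proof (intro allI)
  fix x y :: 'a
  have reduced: "\<And>z::'a. z * z = 0 \<Longrightarrow> z = 0"
    using square_zero_eq_zero[OF assms(2,3)] .
  have nonunit_central: "a * b = b * a" if "\<not> unit_elem a" for a b :: 'a
    using assms(1) that strongly_weakly_nil_clean_central_if_reduced[OF reduced]
    unfolding GSWNC_def by blast
  show "x * y = y * x"
  proof (cases "unit_elem x \<and> unit_elem y")
    case True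
    then show ?thesis using units_commute_if_square_one[OF assms(3)] by blast
  next
    case False
    then show ?thesis using nonunit_central[of x y] nonunit_central[of y x] by auto
  qed
qed

end
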